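(* Let $A,B\in\mathbb{Z}$ with $4A^3+27B^2\ne0$, let $M$ be a positive integer with $\max\{10\sqrt{|A|},5\sqrt[3]{|B|}\}\le M$, let $D$ be a squarefree positive integer and $E_D: y^2=x^3+D^2Ax+D^3B$. Let $P\in E_D(\mathbb{Q})$ with $MD\le x(P)$. Then \[0.01\,x(P)\le x(3P)\le 0.27\,x(P).\] *)

theory Defs
  imports Complex_Main "HOL-Computational_Algebra.Squarefree"
begin

datatype 'a ecpt = Infty | Pt 'a 'a

definition on_curve :: "'a::field \<Rightarrow> 'a \<Rightarrow> 'a ecpt \<Rightarrow> bool" where
  "on_curve a b P = (case P of Infty \<Rightarrow> True | Pt x y \<Rightarrow> y^2 = x^3 + a*x + b)"

fun ec_add :: "'a::field \<Rightarrow> 'a ecpt \<Rightarrow> 'a ecpt \<Rightarrow> 'a ecpt" where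
  "ec_add a Infty Q = Q"
| "ec_add a P Infty = P"
| "ec_add a (Pt x1 y1) (Pt x2 y2) =
     (if x1 = x2 \<and> y1 = - y2 then Infty
      else let l = (if x1 = x2 then (3 * x1^2 + a) / (2 * y1) else (y2 - y1) / (x2 - x1));
               x3 = l^2 - x1 - x2
           in Pt x3 (l * (x1 - x3) - y1))"

end

theory Submission
  imports Defs
begin

text \<open>
  By the division-polynomial formula x(3P) = x - psi_2 psi_4 / psi_3^2 and the homogeneity of
  psi_3, psi_4 in (x, a, b) with weights (1, 2, 3), the quotient x(3P) / x depends only on
  alpha = a / x^2 and beta = b / x^3.  The hypotheses force |alpha| <= 1/100 and |beta| <= 1/125,
  and on that box 1 - x(3P) / x stays in [0.73, 0.99]: after the substitution alpha = u/100,
  beta = v/125 the constant term of the relevant polynomial in u, v dominates the sum of the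
  absolute values of its other coefficients.
\<close>

text \<open>psi3 and psi_4 = 4 y psi4_over_4y are the 3- and 4-division polynomials of
  y^2 = x^3 + a x + b (and psi_2 = 2 y).\<close>

definition psi3 :: "'a::comm_ring_1 \<Rightarrow> 'a \<Rightarrow> 'a \<Rightarrow> 'a" where
  "psi3 a b x = 3*x^4 + 6*a*x^2 + 12*b*x - a^2"

definition psi4_over_4y :: "'a::comm_ring_1 \<Rightarrow> 'a \<Rightarrow> 'a \<Rightarrow> 'a" where
  "psi4_over_4y a b x = x^6 + 5*a*x^4 + 20*b*x^3 - 5*a^2*x^2 - 4*a*b*x - 8*b^2 - a^3"

lemma ec_triple_x_formula:
  fixes a b x y :: "'a::field_char_0"
  assumes curve: "y^2 = x^3 + a*x + b" and "y \<noteq> 0" and "psi3 a b x \<noteq> 0"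
  shows "\<exists>y3. ec_add a (Pt x y) (ec_add a (Pt x y) (Pt x y))
               = Pt (x - 8*y^2 * psi4_over_4y a b x / (psi3 a b x)^2) y3"
proof -
  define \<psi> where "\<psi> = psi3 a b x"
  have "\<psi> \<noteq> 0" using assms(3) by (simp add: \<psi>_def)
  define l where "l = (3*x^2 + a) / (2*y)"
  define x2 where "x2 = l^2 - 2*x"
  define y2 where "y2 = l*(x - x2) - y"
  have double: "ec_add a (Pt x y) (Pt x y) = Pt x2 y2"
    using \<open>y \<noteq> 0\<close> by (simp add: Let_def l_def x2_def y2_def)
  have "x - x2 = (12*x*y^2 - (3*x^2 + a)^2) / (4*y^2)"
    using \<open>y \<noteq> 0\<close> by (simp add: x2_def l_def field_simps power2_eq_square)
  also have "12*x*y^2 - (3*x^2 + a)^2 = \<psi>"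
    unfolding curve \<psi>_def psi3_def by (simp add: algebra_simps eval_nat_numeral)
  finally have dx: "x - x2 = \<psi> / (4*y^2)" .
  then have "x2 \<noteq> x"
    using \<open>y \<noteq> 0\<close> \<open>\<psi> \<noteq> 0\<close> by auto
  have dx': "x2 - x = - (\<psi> / (4*y^2))"
    by (simp add: dx[symmetric])
  have dy: "y2 - y = l*(\<psi> / (4*y^2)) - 2*y"
    unfolding y2_def dx by simp
  define l' where "l' = 8*y^3/\<psi> - l"
  have "(y2 - y) / (x2 - x) = l'"
    unfolding dy dx' using \<open>y \<noteq> 0\<close> \<open>\<psi> \<noteq> 0\<close>
    by (simp add: l'_def field_simps power2_eq_square power3_eq_cube)
  then have triple: "ec_add a (Pt x y) (Pt x2 y2) = Pt (l'^2 - x - x2) (l'*(x - (l'^2 - x - x2)) - y)"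
    using \<open>x2 \<noteq> x\<close> by (simp add: Let_def)
  have "l'^2 - x - x2 = x - 8*y^2 * ((3*x^2 + a)*\<psi> - 8*(y^2)^2) / \<psi>^2"
    using \<open>y \<noteq> 0\<close> \<open>\<psi> \<noteq> 0\<close>
    by (simp add: l'_def x2_def l_def field_simps power2_eq_square power3_eq_cube)
  also have "(3*x^2 + a)*\<psi> - 8*(y^2)^2 = psi4_over_4y a b x"
    unfolding curve \<psi>_def psi3_def psi4_over_4y_def
    by (simp add: algebra_simps eval_nat_numeral)
  finally show ?thesis
    using double triple by (simp add: \<psi>_def)
qed

lemma psi3_homogeneous: "psi3 (\<alpha>*x^2) (\<beta>*x^3) x = x^4 * psi3 \<alpha> \<beta> 1"
  unfolding psi3_def by (simp add: algebra_simps eval_nat_numeral)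

lemma psi4_over_4y_homogeneous: "psi4_over_4y (\<alpha>*x^2) (\<beta>*x^3) x = x^6 * psi4_over_4y \<alpha> \<beta> 1"
  unfolding psi4_over_4y_def by (simp add: algebra_simps eval_nat_numeral)

lemma psi3_pos_small_coeffs:
  fixes \<alpha> \<beta> :: "'a::linordered_field"
  assumes "\<bar>\<alpha>\<bar> \<le> 1/100" and "\<bar>\<beta>\<bar> \<le> 1/125"
  shows "psi3 \<alpha> \<beta> 1 > 0"
proof -
  have "\<alpha>^2 \<le> 1"
    using assms(1) abs_square_le_1[of \<alpha>] by linarith
  then show ?thesis
    using assms unfolding psi3_def abs_le_iff by simp
qed

lemma triple_ratio_bounds:
  fixes \<alpha> \<beta> :: "'a::linordered_field"
  assumes "\<bar>\<alpha>\<bar> \<le> 1/100" and "\<bar>\<beta>\<bar> \<le> 1/125"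
  shows "73/100 * (psi3 \<alpha> \<beta> 1)^2 \<le> 8*(1 + \<alpha> + \<beta>) * psi4_over_4y \<alpha> \<beta> 1"
    and "8*(1 + \<alpha> + \<beta>) * psi4_over_4y \<alpha> \<beta> 1 \<le> 99/100 * (psi3 \<alpha> \<beta> 1)^2"
proof -
  define u v where "u = 100*\<alpha>" and "v = 125*\<beta>"
  have \<alpha>: "\<alpha> = u/100" and \<beta>: "\<beta> = v/125"
    by (simp_all add: u_def v_def)
  have "\<bar>u\<bar> \<le> 1" "\<bar>v\<bar> \<le> 1"
    using assms by (simp_all add: u_def v_def abs_mult)
  then have mono: "\<bar>u^i * v^j\<bar> \<le> 1" for i j :: nat
    by (simp add: abs_mult power_abs power_le_one mult_le_one)
  have monomials: "\<bar>v\<bar> \<le> 1" "\<bar>v^2\<bar> \<le> 1" "\<bar>v^3\<bar> \<le> 1" "\<bar>u\<bar> \<le> 1" "\<bar>u*v\<bar> \<le> 1"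
    "\<bar>u*v^2\<bar> \<le> 1" "\<bar>u^2\<bar> \<le> 1" "\<bar>u^2*v\<bar> \<le> 1" "\<bar>u^3\<bar> \<le> 1" "\<bar>u^3*v\<bar> \<le> 1" "\<bar>u^4\<bar> \<le> 1"
    using mono[of 0 1] mono[of 0 2] mono[of 0 3] mono[of 1 0] mono[of 1 1] mono[of 1 2]
      mono[of 2 0] mono[of 2 1] mono[of 3 0] mono[of 3 1] mono[of 4 0]
    by simp_all
  have "8*(1 + \<alpha> + \<beta>) * psi4_over_4y \<alpha> \<beta> 1 - 73/100 * (psi3 \<alpha> \<beta> 1)^2
      = 143/100 + 2886/3125*v - 228/390625*v^2 - 64/1953125*v^3 + 543/2500*u + 393/78125*u*v
        - 24/390625*u*v^2 - 219/100000*u^2 - 681/15625000*u^2*v - 981/25000000*u^3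
        - 1/15625000*u^3*v - 873/10000000000*u^4"
    unfolding \<alpha> \<beta> psi3_def psi4_over_4y_def by (simp add: field_simps power2_eq_square power3_eq_cube power4_eq_xxxx)
  then show "73/100 * (psi3 \<alpha> \<beta> 1)^2 \<le> 8*(1 + \<alpha> + \<beta>) * psi4_over_4y \<alpha> \<beta> 1"
    using monomials unfolding abs_le_iff by linarith
  have "99/100 * (psi3 \<alpha> \<beta> 1)^2 - 8*(1 + \<alpha> + \<beta>) * psi4_over_4y \<alpha> \<beta> 1
      = 91/100 - 2418/3125*v + 1164/390625*v^2 + 64/1953125*v^3 - 309/2500*u - 159/78125*u*v
        + 24/390625*u*v^2 + 297/100000*u^2 + 603/15625000*u^2*v + 903/25000000*u^3
        + 1/15625000*u^3*v + 899/10000000000*u^4"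
    unfolding \<alpha> \<beta> psi3_def psi4_over_4y_def by (simp add: field_simps power2_eq_square power3_eq_cube power4_eq_xxxx)
  then show "8*(1 + \<alpha> + \<beta>) * psi4_over_4y \<alpha> \<beta> 1 \<le> 99/100 * (psi3 \<alpha> \<beta> 1)^2"
    using monomials unfolding abs_le_iff by linarith
qed

lemma ec_triple_x_bounds:
  fixes a b x y :: "'a::linordered_field"
  assumes "x > 0" and "\<bar>a\<bar> \<le> x^2/100" and "\<bar>b\<bar> \<le> x^3/125"
    and curve: "y^2 = x^3 + a*x + b"
  shows "\<exists>x3 y3. ec_add a (Pt x y) (ec_add a (Pt x y) (Pt x y)) = Pt x3 y3
           \<and> 0.01 * x \<le> x3 \<and> x3 \<le> 0.27 * x"
proof -
  define \<alpha> \<beta> where "\<alpha> = a/x^2" and "\<beta> = b/x^3"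
  have a: "a = \<alpha>*x^2" and b: "b = \<beta>*x^3"
    using \<open>x > 0\<close> by (simp_all add: \<alpha>_def \<beta>_def)
  have small: "\<bar>\<alpha>\<bar> \<le> 1/100" "\<bar>\<beta>\<bar> \<le> 1/125"
    using assms by (simp_all add: \<alpha>_def \<beta>_def abs_div divide_le_eq)
  define s where "s = 1 + \<alpha> + \<beta>"
  have "s > 0"
    using small by (simp add: s_def abs_le_iff)
  have y2: "y^2 = x^3 * s"
    unfolding curve a b s_def by (simp add: algebra_simps eval_nat_numeral)
  then have "y \<noteq> 0"
    using \<open>s > 0\<close> \<open>x > 0\<close> by auto
  have psi3_scaled: "psi3 a b x = x^4 * psi3 \<alpha> \<beta> 1"
    unfolding a b by (rule psi3_homogeneous)
  have psi4_scaled: "psi4_over_4y a b x = x^6 * psi4_over_4y \<alpha> \<beta> 1"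
    unfolding a b by (rule psi4_over_4y_homogeneous)
  have "psi3 \<alpha> \<beta> 1 > 0"
    using small by (rule psi3_pos_small_coeffs)
  then have "psi3 a b x \<noteq> 0"
    using \<open>x > 0\<close> psi3_scaled by simp
  then obtain y3 where triple:
    "ec_add a (Pt x y) (ec_add a (Pt x y) (Pt x y)) = Pt (x - 8*y^2 * psi4_over_4y a b x / (psi3 a b x)^2) y3"
    using ec_triple_x_formula[OF curve \<open>y \<noteq> 0\<close>] by blast
  define r where "r = 8*s*psi4_over_4y \<alpha> \<beta> 1 / (psi3 \<alpha> \<beta> 1)^2"
  have x3: "x - 8*y^2 * psi4_over_4y a b x / (psi3 a b x)^2 = x - r * x"
    unfolding y2 psi3_scaled psi4_scaled r_def using \<open>x > 0\<close> \<open>psi3 \<alpha> \<beta> 1 > 0\<close>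
    by (simp add: field_simps eval_nat_numeral)
  have "73/100 \<le> r" "r \<le> 99/100"
    using triple_ratio_bounds[OF small] \<open>psi3 \<alpha> \<beta> 1 > 0\<close>
    by (simp_all add: r_def s_def le_divide_eq divide_le_eq)
  then have "73/100 * x \<le> r * x" "r * x \<le> 99/100 * x"
    using \<open>x > 0\<close> by (simp_all add: mult_right_mono)
  then show ?thesis
    using triple x3 by auto
qed

lemma pow_le_of_mult_root_le:
  fixes a c m :: real
  assumes "0 < n" and "0 \<le> c" and "c * root n \<bar>a\<bar> \<le> m"
  shows "c^n * \<bar>a\<bar> \<le> m^n"
proof -
  have "(c * root n \<bar>a\<bar>)^n \<le> m^n"
    using assms by (intro power_mono) auto
  then show ?thesis
    using \<open>0 < n\<close> by (simp add: power_mult_distrib)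
qed

lemma scaled_coeff_bound:
  fixes A M D c :: int and x :: "'a::linordered_idom"
  assumes "c * \<bar>A\<bar> \<le> M^n" and "M \<ge> 0" and "D \<ge> 0" and "of_int (M*D) \<le> x"
  shows "of_int c * \<bar>of_int (D^n * A)\<bar> \<le> x^n"
proof -
  have "c * \<bar>D^n * A\<bar> \<le> (M*D)^n"
    using mult_left_mono[OF assms(1), of "D^n"] \<open>D \<ge> 0\<close>
    by (simp add: abs_mult power_mult_distrib algebra_simps)
  then have "of_int c * \<bar>of_int (D^n * A)\<bar> \<le> (of_int (M*D) :: 'a)^n"
    by (metis of_int_abs of_int_le_iff of_int_mult of_int_power)
  also have "\<dots> \<le> x^n"
    using assms(2-4) by (simp add: power_mono)
  finally show ?thesis .
qed

theorem lemma3p8: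
  fixes A B M D :: int and x y :: rat
  assumes "4 * A^3 + 27 * B^2 \<noteq> 0"
    and "M > 0"
    and "10 * sqrt \<bar>real_of_int A\<bar> \<le> real_of_int M"
    and "5 * root 3 \<bar>real_of_int B\<bar> \<le> real_of_int M"
    and "D > 0" and "squarefree D"
    and "on_curve (of_int (D^2 * A)) (of_int (D^3 * B)) (Pt x y)"
    and "of_int (M * D) \<le> x"
  shows "\<exists>x3 y3. ec_add (of_int (D^2 * A)) (Pt x y) (ec_add (of_int (D^2 * A)) (Pt x y) (Pt x y)) = Pt x3 y3
           \<and> 0.01 * x \<le> x3 \<and> x3 \<le> 0.27 * x"
proof -
  have "real_of_int (100 * \<bar>A\<bar>) \<le> real_of_int (M^2)"
    using pow_le_of_mult_root_le[of 2 10 "real_of_int A"] assms(3) by (simp add: sqrt_def)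
  then have "100 * \<bar>A\<bar> \<le> M^2"
    by (simp only: of_int_le_iff)
  have "real_of_int (125 * \<bar>B\<bar>) \<le> real_of_int (M^3)"
    using pow_le_of_mult_root_le[of 3 5 "real_of_int B"] assms(4) by simp
  then have "125 * \<bar>B\<bar> \<le> M^3"
    by (simp only: of_int_le_iff)
  have "M \<ge> 0" "D \<ge> 0"
    using assms(2,5) by simp_all
  have "(0::rat) < of_int (M*D)"
    using assms(2,5) by simp
  then have "0 < x"
    using assms(8) by linarith
  have "\<bar>of_int (D^2 * A)\<bar> \<le> x^2/100"
    using scaled_coeff_bound[OF \<open>100 * \<bar>A\<bar> \<le> M^2\<close> \<open>M \<ge> 0\<close> \<open>D \<ge> 0\<close> assms(8)] by simp
  moreover have "\<bar>of_int (D^3 * B)\<bar> \<le> x^3/125"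
    using scaled_coeff_bound[OF \<open>125 * \<bar>B\<bar> \<le> M^3\<close> \<open>M \<ge> 0\<close> \<open>D \<ge> 0\<close> assms(8)] by simp
  moreover have "y^2 = x^3 + of_int (D^2 * A) * x + of_int (D^3 * B)"
    using assms(7) by (simp add: on_curve_def)
  ultimately show ?thesis
    using ec_triple_x_bounds[OF \<open>0 < x\<close>] by blast
qed

end
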